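(* Consider a run of Dynamic A* (with \texttt{reeval} true or false) using a dyn-safe dynamic heuristic, and an iteration $i$ of it. Let $s$ be a state settled in iteration $i$, and let $s'$ be a state with $h^*(s')<\infty$ such that there is an optimal path $\langle t_1,\dots,t_n\rangle$ from $s_I$ to $s'$ with $t_n=\langle s,\ell,s'\rangle$. Then at the beginning of iteration $i$, either Open contains an entry $\langle s',\hat g,\cdot\rangle$ with $\hat g=g^*(s')$, or $s'$ is settled in iteration $i$.
   Context: A transition system is $\mathcal T=\langle S,L,c,T,s_I,S_G\rangle$ with finite states $S$, finite labels $L$, cost function $c:L\to\mathbb R_{\ge0}$, transitions $T\subseteq S\times L\times S$, initial state $s_I$, goal states $S_G\subseteq S$. Paths, costs, solutions (paths from $s_I$ to a goal state) are as usual; $g^*(s)$ is the cost of an optimal path from $s_I$ to $s$ and $h^*(s)$ the minimal cost of a path from $s$ to a goal ($\infty$ if none). An information source $\sigma$ consists of a set $\mathcal I_\sigma$, $\iota_0^\sigma\in\mathcal I_\sigma$, $\mathrm{update}_\sigma:\mathcal I_\sigma\times T\to\mathcal I_\sigma$, $\mathrm{refine}_\sigma:\mathcal I_\sigma\times S\to\mathcal I_\sigma$. Reachable information: $\iota_n$ is reachable if obtained from $\iota_0^\sigma$ by a sequence of refine steps on states and update steps on transitions $e_1,\dots,e_n$, where each refined state and each origin of an updated transition is $s_I$ or the target of an earlier updated transition. A dynamic heuristic over $\sigma$ is $h:S\times\mathcal I_\sigma\to\mathbb R_{\ge0}\cup\{\infty\}$; it is dyn-safe if $h(s,\iota)=\infty$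 implies $h^*(s)=\infty$ for all $s$ and reachable $\iota$. Parent source $\sigma_p$: $\mathcal I_{\sigma_p}$ = partial functions $S\rightharpoonup\mathbb R_{\ge0}\times(T\cup\{\bot\})$; $\iota_0=\{s_I\mapsto\langle0,\bot\rangle\}$; refine is the identity; $\mathrm{update}(\iota,\langle s,\ell,s'\rangle)$ with $\iota(s)=\langle g,\cdot\rangle$ changes only $s'$, setting it to $\langle g+c(\ell),\langle s,\ell,s'\rangle\rangle$ if $\iota(s')$ is undefined or has $g$-component $\ge g+c(\ell)$, otherwise unchanged. Dynamic A* takes $\mathcal T$, sources $\sigma_p,\sigma_h$, a dynamic heuristic $h$ over $\sigma_h$ and a Boolean flag \texttt{reeval}. Notation: at any moment $g(s)$ is the $g$-component of the current $\mathcal I(\sigma_p)(s)$ and $h(s)$ denotes $h(s,\mathcal I(\sigma_h))$ for the current $\mathcal I(\sigma_h)$. Open is a priority queue of entries $\langle s,g,h\rangle$ (duplicates allowed), popped by minimal stored value $g+h$ (ties arbitrary). Algorithm: 1. $\mathcal I(\sigma):=\iota_0^\sigma$ for both sources; $S_{\mathrm{known}}:=\{s_I\}$; Closed $:=\emptyset$; Open empty. If $h(s_I)<\infty$ insert $\langle s_I,g(s_I),h(s_I)\rangle$. 2. While Open is nonempty: pop an entry $\langle s,\hat g,\hat h\rangle$ of minimal $\hat g+\hat h$. If $s\in$ Closed, continue with the next iteration. Otherwise set $\mathcal I(\sigma):=\mathrm{refine}_\sigma(\mathcal I(\sigma),s)$ for both sources. If \texttt{reeval} is true and $\hat h<h(s)$: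 if $h(s)<\infty$ insert $\langle s,g(s),h(s)\rangle$; continue with the next iteration (this is a re-evaluation). Otherwise add $s$ to Closed ($s$ is expanded). If $s\in S_G$, return the path obtained by following the parent pointers of $\mathcal I(\sigma_p)$ from $s$ back to $s_I$. Otherwise, for each $t=\langle s,\ell,s'\rangle\in T$ in some order: let $old:=g(s')$ if $s'\in S_{\mathrm{known}}$ and undefined otherwise; set $\mathcal I(\sigma):=\mathrm{update}_\sigma(\mathcal I(\sigma),t)$ for both sources; add $s'$ to $S_{\mathrm{known}}$; if $h(s')=\infty$ skip $s'$; else if $old$ is undefined insert $\langle s',g(s'),h(s')\rangle$; else if $old>g(s')$, remove $s'$ from Closed if it is there (reopening) and insert $\langle s',g(s'),h(s')\rangle$. 3. Return "unsolvable". Times: the iterations of the while loop are numbered $i=1,2,\dots$ (iteration $i$ begins just before its pop); within iteration $i$ a step counter $j$ is $0$ at the start, becomes $1$ after the refine step, and increases by $1$ after each update step on a successor transition. Time $\langle i,j\rangle$ (time $\langle0,0\rangle$ is the initialization) is ordered lexicographically, and $g^{i,j}(s)$, $h^{i,j}(s)$ denote $g(s)$ and $h(s)$ with the information current at that time. A state $s$ is settled in iteration $i$ if it was expanded (added to Closed) in some iteration $i'<i$ with $g^{i',0}(s)=g^*(s)$. *)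

theory Defs
  imports Main "HOL-Library.Extended_Real" "HOL-Library.Multiset"
begin

type_synonym ('s,'l) trans = "'s \<times> 'l \<times> 's"

definition trans_sys ::
  "'s set \<Rightarrow> 'l set \<Rightarrow> ('l \<Rightarrow> real) \<Rightarrow> ('s,'l) trans set \<Rightarrow> 's \<Rightarrow> 's set \<Rightarrow> bool" where
  "trans_sys S L c T sI SG \<longleftrightarrow> finite S \<and> finite L \<and> (\<forall>l\<in>L. c l \<ge> 0)
     \<and> T \<subseteq> S \<times> L \<times> S \<and> sI \<in> S \<and> SG \<subseteq> S"

fun is_path :: "('s,'l) trans set \<Rightarrow> 's \<Rightarrow> ('s,'l) trans list \<Rightarrow> 's \<Rightarrow> bool" where
  "is_path T s [] s' \<longleftrightarrow> s = s'"
| "is_path T s ((a,l,b) # ts) s' \<longleftrightarrow> a = s \<and> (a,l,b) \<in> T \<and> is_path T b ts s'"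

definition path_cost :: "('l \<Rightarrow> real) \<Rightarrow> ('s,'l) trans list \<Rightarrow> real" where
  "path_cost c ts = sum_list (map (\<lambda>(_,l,_). c l) ts)"

text \<open>g* and h* (Inf of the empty set is \<infinity>).\<close>
definition gstar :: "('s,'l) trans set \<Rightarrow> ('l \<Rightarrow> real) \<Rightarrow> 's \<Rightarrow> 's \<Rightarrow> ereal" where
  "gstar T c sI s = Inf {ereal (path_cost c ts) | ts. is_path T sI ts s}"

definition hstar :: "('s,'l) trans set \<Rightarrow> ('l \<Rightarrow> real) \<Rightarrow> 's set \<Rightarrow> 's \<Rightarrow> ereal" where
  "hstar T c SG s = Inf {ereal (path_cost c ts) | ts s'. is_path T s ts s' \<and> s' \<in> SG}"

text \<open>Reachable information of an information source (iota0, update, refine),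
  tracking the set K of states that are s_I or targets of earlier updated transitions.\<close>
inductive reach_info ::
  "('s,'l) trans set \<Rightarrow> 's \<Rightarrow> 'i \<Rightarrow> ('i \<Rightarrow> ('s,'l) trans \<Rightarrow> 'i) \<Rightarrow> ('i \<Rightarrow> 's \<Rightarrow> 'i)
    \<Rightarrow> 'i \<Rightarrow> 's set \<Rightarrow> bool"
  for T sI iota0 upd refine where
  init: "reach_info T sI iota0 upd refine iota0 {sI}"
| refine: "reach_info T sI iota0 upd refine \<iota> K \<Longrightarrow> s \<in> K
           \<Longrightarrow> reach_info T sI iota0 upd refine (refine \<iota> s) K"
| update: "reach_info T sI iota0 upd refine \<iota> K \<Longrightarrow> (s,l,s') \<in> T \<Longrightarrow> s \<in> K
           \<Longrightarrow> reach_info T sI iota0 upd refine (upd \<iota> (s,l,s')) (insert s' K)"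

definition dyn_safe ::
  "'s set \<Rightarrow> ('s,'l) trans set \<Rightarrow> ('l \<Rightarrow> real) \<Rightarrow> 's \<Rightarrow> 's set
   \<Rightarrow> 'i \<Rightarrow> ('i \<Rightarrow> ('s,'l) trans \<Rightarrow> 'i) \<Rightarrow> ('i \<Rightarrow> 's \<Rightarrow> 'i) \<Rightarrow> ('s \<Rightarrow> 'i \<Rightarrow> ereal) \<Rightarrow> bool" where
  "dyn_safe S T c sI SG iota0 upd refine h \<longleftrightarrow>
     (\<forall>\<iota> K. reach_info T sI iota0 upd refine \<iota> K \<longrightarrow>
        (\<forall>s\<in>S. h s \<iota> = \<infinity> \<longrightarrow> hstar T c SG s = \<infinity>))"

definition dyn_heuristic :: "('s \<Rightarrow> 'i \<Rightarrow> ereal) \<Rightarrow> bool" where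
  "dyn_heuristic h \<longleftrightarrow> (\<forall>s \<iota>. h s \<iota> \<ge> 0)"

text \<open>Parent source sigma_p: information is a partial map to (g, parent transition or bot).\<close>
type_synonym ('s,'l) pinfo = "'s \<Rightarrow> (real \<times> ('s,'l) trans option) option"

definition upd_p :: "('l \<Rightarrow> real) \<Rightarrow> ('s,'l) pinfo \<Rightarrow> ('s,'l) trans \<Rightarrow> ('s,'l) pinfo" where
  "upd_p c \<iota> t = (case t of (s,l,s') \<Rightarrow>
     (case \<iota> s of None \<Rightarrow> \<iota>
      | Some (g,_) \<Rightarrow> if \<iota> s' = None \<or> g + c l \<le> fst (the (\<iota> s'))
                      then \<iota>(s' \<mapsto> (g + c l, Some t)) else \<iota>))"

text \<open>Configuration of Dynamic A*; hist records, for every expansion, the expanded state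
  together with its g-value at the beginning of that iteration.\<close>
record ('s,'l,'i) cfg =
  pinf :: "('s,'l) pinfo"
  hinf :: 'i
  known :: "'s set"
  closed :: "'s set"
  opn :: "('s \<times> real \<times> ereal) multiset"
  hist :: "('s \<times> real) list"

definition gval :: "('s,'l,'i,'x) cfg_scheme \<Rightarrow> 's \<Rightarrow> real" where
  "gval C s = fst (the (pinf C s))"

definition prio :: "'s \<times> real \<times> ereal \<Rightarrow> ereal" where
  "prio e = (case e of (s,g,hh) \<Rightarrow> ereal g + hh)"

definition da_init :: "'s \<Rightarrow> 'i \<Rightarrow> ('s \<Rightarrow> 'i \<Rightarrow> ereal) \<Rightarrow> ('s,'l,'i) cfg" where
  "da_init sI iota0 h =
     \<lparr> pinf = [sI \<mapsto> (0, None)], hinf = iota0, known = {sI}, closed = {},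
       opn = (if h sI iota0 < \<infinity> then {#(sI, 0, h sI iota0)#} else {#}), hist = [] \<rparr>"

definition succ_step ::
  "('l \<Rightarrow> real) \<Rightarrow> ('i \<Rightarrow> ('s,'l) trans \<Rightarrow> 'i) \<Rightarrow> ('s \<Rightarrow> 'i \<Rightarrow> ereal)
    \<Rightarrow> ('s,'l) trans \<Rightarrow> ('s,'l,'i) cfg \<Rightarrow> ('s,'l,'i) cfg" where
  "succ_step c upd h t C = (case t of (s,l,s') \<Rightarrow>
     (let old = (if s' \<in> known C then Some (gval C s') else None);
          C1 = C\<lparr>pinf := upd_p c (pinf C) t, hinf := upd (hinf C) t, known := insert s' (known C)\<rparr>;
          hv = h s' (hinf C1);
          gn = gval C1 s'
      in if hv = \<infinity> then C1
         else if old = None then C1\<lparr>opn := opn C1 + {#(s', gn, hv)#}\<rparr>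
         else if the old > gn then C1\<lparr>closed := closed C1 - {s'}, opn := opn C1 + {#(s', gn, hv)#}\<rparr>
         else C1))"

text \<open>Nondeterminism covers tie-breaking and the order of successor transitions.
  An iteration expanding a goal state returns, hence has no successor configuration.\<close>
inductive da_step ::
  "('l \<Rightarrow> real) \<Rightarrow> ('s,'l) trans set \<Rightarrow> 's set \<Rightarrow> ('i \<Rightarrow> ('s,'l) trans \<Rightarrow> 'i) \<Rightarrow> ('i \<Rightarrow> 's \<Rightarrow> 'i)
    \<Rightarrow> ('s \<Rightarrow> 'i \<Rightarrow> ereal) \<Rightarrow> bool \<Rightarrow> ('s,'l,'i) cfg \<Rightarrow> ('s,'l,'i) cfg \<Rightarrow> bool"
  for c T SG upd refine h reeval where
  skip: "\<lbrakk> e \<in># opn C; \<forall>e'\<in>#opn C. prio e \<le> prio e'; e = (s, gh, hh); s \<in> closed C \<rbrakk>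
     \<Longrightarrow> da_step c T SG upd refine h reeval C (C\<lparr>opn := opn C - {#e#}\<rparr>)"
| reeval: "\<lbrakk> e \<in># opn C; \<forall>e'\<in>#opn C. prio e \<le> prio e'; e = (s, gh, hh); s \<notin> closed C;
             \<iota>1 = refine (hinf C) s; reeval; hh < h s \<iota>1 \<rbrakk>
     \<Longrightarrow> da_step c T SG upd refine h reeval C
           (C\<lparr>hinf := \<iota>1, opn := opn C - {#e#} +
               (if h s \<iota>1 < \<infinity> then {#(s, gval C s, h s \<iota>1)#} else {#})\<rparr>)"
| expand: "\<lbrakk> e \<in># opn C; \<forall>e'\<in>#opn C. prio e \<le> prio e'; e = (s, gh, hh); s \<notin> closed C;
             \<iota>1 = refine (hinf C) s; \<not> (reeval \<and> hh < h s \<iota>1); s \<notin> SG;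
             distinct ts; set ts = {t \<in> T. fst t = s} \<rbrakk>
     \<Longrightarrow> da_step c T SG upd refine h reeval C
           (fold (succ_step c upd h) ts
              (C\<lparr>hinf := \<iota>1, opn := opn C - {#e#}, closed := insert s (closed C),
                  hist := hist C @ [(s, gval C s)]\<rparr>))"

text \<open>s is settled at the beginning of the iteration whose starting configuration is C.\<close>
definition settled :: "('s,'l) trans set \<Rightarrow> ('l \<Rightarrow> real) \<Rightarrow> 's \<Rightarrow> ('s,'l,'i) cfg \<Rightarrow> 's \<Rightarrow> bool" where
  "settled T c sI C s \<longleftrightarrow> (\<exists>g. (s, g) \<in> set (hist C) \<and> ereal g = gstar T c sI s)"

end

theory Submission
  imports Defs
begin

text \<open>The run maintains an invariant of A*-type bookkeeping: every g-value is the cost of an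
  actual path, every known unclosed state that can still reach a goal has an Open entry carrying
  its current g-value, every closed such state was expanded with its current g-value, and each
  expansion of a state x with value g has relaxed all transitions out of x, leaving every
  successor y known with g(y) \<le> g + c(l). The invariant survives every iteration because
  dyn-safety never lets a state that can reach a goal be dropped for an infinite heuristic value.
  Now if s was expanded with g = g*(s), relaxation gives g(s') \<le> g*(s) + c(l) = g*(s') along the
  optimal path, while g(s') is always the cost of some path, so g(s') = g*(s'); by the
  invariant s' then has an Open entry with this value or was expanded with it.\<close>

lemma is_path_append [simp]:
  "is_path T x (p @ q) z \<longleftrightarrow> (\<exists>y. is_path T x p y \<and> is_path T y q z)"
  by (induction p arbitrary: x) auto

lemma path_cost_Nil [simp]: "path_cost c [] = 0"
  by (simp add: path_cost_def)

lemma path_cost_append [simp]: "path_cost c (p @ q) = path_cost c p + path_cost c q"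
  by (simp add: path_cost_def)

lemma path_cost_single [simp]: "path_cost c [(a, l, b)] = c l"
  by (simp add: path_cost_def)

lemma gstar_le_path_cost: "is_path T sI p y \<Longrightarrow> gstar T c sI y \<le> ereal (path_cost c p)"
  unfolding gstar_def by (rule Inf_lower) blast

lemma gstar_last_step_le:
  assumes "is_path T sI ts s'" "ts \<noteq> []" "last ts = (s, l, s')"
  shows "(s, l, s') \<in> T" and "gstar T c sI s + ereal (c l) \<le> ereal (path_cost c ts)"
proof -
  obtain p where ts: "ts = p @ [(s, l, s')]"
    using assms(2,3) by (metis append_butlast_last_id)
  then have p: "is_path T sI p s" and "(s, l, s') \<in> T"
    using assms(1) by auto
  then show "(s, l, s') \<in> T" by blast
  have "gstar T c sI s + ereal (c l) \<le> ereal (path_cost c p) + ereal (c l)"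
    using gstar_le_path_cost[OF p] by (rule add_right_mono)
  then show "gstar T c sI s + ereal (c l) \<le> ereal (path_cost c ts)"
    by (simp add: ts)
qed

lemma upd_p_other: "y \<noteq> b \<Longrightarrow> upd_p c \<iota> (a, l, b) y = \<iota> y"
  by (auto simp: upd_p_def split: option.split)

lemma upd_p_target:
  assumes "\<iota> a = Some (ga, pa)"
  shows "upd_p c \<iota> (a, l, b) b \<noteq> None"
    and "fst (the (upd_p c \<iota> (a, l, b) b)) \<le> ga + c l"
    and "\<iota> b \<noteq> None \<Longrightarrow> fst (the (upd_p c \<iota> (a, l, b) b)) \<le> fst (the (\<iota> b))"
    and "upd_p c \<iota> (a, l, b) b = \<iota> b \<or> fst (the (upd_p c \<iota> (a, l, b) b)) = ga + c l"
  using assms by (auto simp: upd_p_def)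

lemma succ_step_fields:
  "pinf (succ_step c upd h (a, l, b) C) = upd_p c (pinf C) (a, l, b)"
  "hinf (succ_step c upd h (a, l, b) C) = upd (hinf C) (a, l, b)"
  "known (succ_step c upd h (a, l, b) C) = insert b (known C)"
  "hist (succ_step c upd h (a, l, b) C) = hist C"
  by (simp_all add: succ_step_def Let_def)

lemma gval_succ_step_other: "y \<noteq> b \<Longrightarrow> gval (succ_step c upd h (a, l, b) C) y = gval C y"
  by (simp add: gval_def succ_step_fields upd_p_other)

lemma succ_step_cases [consumes 1]:
  assumes "C' = succ_step c upd h (a, l, b) C"
  obtains (infinite) "h b (hinf C') = \<infinity>" "opn C' = opn C" "closed C' = closed C"
  | (new) "b \<notin> known C" "opn C' = add_mset (b, gval C' b, h b (hinf C')) (opn C)"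
      "closed C' = closed C"
  | (reopened) "gval C' b < gval C b" "opn C' = add_mset (b, gval C' b, h b (hinf C')) (opn C)"
      "closed C' = closed C - {b}"
  | (unchanged) "b \<in> known C" "gval C b \<le> gval C' b" "opn C' = opn C" "closed C' = closed C"
  using assms unfolding succ_step_def Let_def
  by (cases "h b (upd (hinf C) (a, l, b)) = \<infinity>"; cases "b \<in> known C")
    (auto simp: gval_def split: if_splits)

lemma succ_step_opn_closed:
  fixes c upd h a l b and C :: "('s,'l,'i) cfg"
  defines "C' \<equiv> succ_step c upd h (a, l, b) C"
  shows "e \<in># opn C \<Longrightarrow> e \<in># opn C'"
    and "e \<in># opn C' \<Longrightarrow> e \<in># opn C \<or> fst e = b"
    and "closed C' \<subseteq> closed C"
    and "closed C - {b} \<subseteq> closed C'"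
proof -
  have "(\<forall>e. e \<in># opn C \<longrightarrow> e \<in># opn C') \<and> (\<forall>e. e \<in># opn C' \<longrightarrow> e \<in># opn C \<or> fst e = b)
    \<and> closed C' \<subseteq> closed C \<and> closed C - {b} \<subseteq> closed C'"
    using C'_def[THEN meta_eq_to_obj_eq] by (cases rule: succ_step_cases) auto
  then show "e \<in># opn C \<Longrightarrow> e \<in># opn C'" and "e \<in># opn C' \<Longrightarrow> e \<in># opn C \<or> fst e = b"
    and "closed C' \<subseteq> closed C" and "closed C - {b} \<subseteq> closed C'"
    by blast+
qed

definition improves :: "('s,'l,'i) cfg \<Rightarrow> ('s,'l,'i) cfg \<Rightarrow> bool" where
  "improves C C' \<longleftrightarrow>
     known C \<subseteq> known C' \<and> (\<forall>y\<in>known C. gval C' y \<le> gval C y) \<and> hist C' = hist C"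

lemma improves_refl: "improves C C"
  by (simp add: improves_def)

lemma improves_trans:
  assumes "improves C C'" "improves C' C''"
  shows "improves C C''"
proof -
  have "gval C'' y \<le> gval C y" if "y \<in> known C" for y
  proof -
    have "gval C'' y \<le> gval C' y"
      using assms that unfolding improves_def by blast
    also have "\<dots> \<le> gval C y"
      using assms(1) that unfolding improves_def by blast
    finally show ?thesis .
  qed
  moreover have "known C \<subseteq> known C''" "hist C'' = hist C"
    using assms unfolding improves_def by auto
  ultimately show ?thesis
    unfolding improves_def by blast
qed

locale dyn_astar =
  fixes S :: "'s set" and c :: "'l \<Rightarrow> real" and T :: "('s,'l) trans set"
    and sI :: 's and SG :: "'s set"
    and iota0 :: 'i and upd :: "'i \<Rightarrow> ('s,'l) trans \<Rightarrow> 'i" and refine :: "'i \<Rightarrow> 's \<Rightarrow> 'i"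
    and h :: "'s \<Rightarrow> 'i \<Rightarrow> ereal"
  assumes targets_in_S: "\<And>a l b. (a, l, b) \<in> T \<Longrightarrow> b \<in> S"
    and initial_in_S: "sI \<in> S"
    and safe: "dyn_safe S T c sI SG iota0 upd refine h"
begin

lemma h_finite_if_solvable:
  assumes "reach_info T sI iota0 upd refine \<iota> K" "x \<in> S" "hstar T c SG x < \<infinity>"
  shows "h x \<iota> < \<infinity>"
proof (rule ccontr)
  assume "\<not> h x \<iota> < \<infinity>"
  then have "h x \<iota> = \<infinity>" by simp
  then have "hstar T c SG x = \<infinity>"
    using safe assms(1,2) unfolding dyn_safe_def by blast
  then show False using assms(3) by simp
qed

definition cfg_wf :: "('s,'l,'i) cfg \<Rightarrow> bool" where
  "cfg_wf C \<longleftrightarrow> dom (pinf C) = known C \<and> known C \<subseteq> S \<and> closed C \<subseteq> known C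
     \<and> (\<forall>e\<in>#opn C. fst e \<in> known C)
     \<and> reach_info T sI iota0 upd refine (hinf C) (known C)
     \<and> (\<forall>y\<in>known C. \<exists>p. is_path T sI p y \<and> path_cost c p = gval C y)"

definition open_complete :: "('s,'l,'i) cfg \<Rightarrow> bool" where
  "open_complete C \<longleftrightarrow>
     (\<forall>x\<in>known C - closed C. hstar T c SG x < \<infinity> \<longrightarrow> (\<exists>hh. (x, gval C x, hh) \<in># opn C))"

definition closed_recorded :: "('s,'l,'i) cfg \<Rightarrow> bool" where
  "closed_recorded C \<longleftrightarrow> (\<forall>x\<in>closed C. hstar T c SG x < \<infinity> \<longrightarrow> (x, gval C x) \<in> set (hist C))"

definition expansions_relaxed :: "('s,'l,'i) cfg \<Rightarrow> bool" where
  "expansions_relaxed C \<longleftrightarrow>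
     (\<forall>x g l y. (x, g) \<in> set (hist C) \<longrightarrow> (x, l, y) \<in> T \<longrightarrow> y \<in> known C \<and> gval C y \<le> g + c l)"

definition da_inv :: "('s,'l,'i) cfg \<Rightarrow> bool" where
  "da_inv C \<longleftrightarrow> cfg_wf C \<and> open_complete C \<and> closed_recorded C"

context
  fixes C :: "('s,'l,'i) cfg" and a :: 's and l :: 'l and b :: 's
  assumes wf: "cfg_wf C" and edge: "(a, l, b) \<in> T" and source_known: "a \<in> known C"
begin

lemma succ_step_target:
  defines "C' \<equiv> succ_step c upd h (a, l, b) C"
  shows "b \<in> dom (pinf C')"
    and "gval C' b \<le> gval C a + c l"
    and "b \<in> known C \<Longrightarrow> gval C' b \<le> gval C b"
    and "pinf C' b = pinf C b \<or> gval C' b = gval C a + c l"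
proof -
  have "a \<in> dom (pinf C)"
    using wf source_known by (simp add: cfg_wf_def)
  then obtain ga pa where ga: "pinf C a = Some (ga, pa)" "gval C a = ga"
    by (auto simp: gval_def)
  note upd = upd_p_target[where \<iota> = "pinf C" and a = a and c = c and l = l and b = b, OF ga(1)]
  have "b \<in> known C \<Longrightarrow> pinf C b \<noteq> None"
    using wf unfolding cfg_wf_def by blast
  then show "b \<in> dom (pinf C')" and "gval C' b \<le> gval C a + c l"
    and "b \<in> known C \<Longrightarrow> gval C' b \<le> gval C b"
    and "pinf C' b = pinf C b \<or> gval C' b = gval C a + c l"
    using upd ga(2) by (auto simp: C'_def gval_def succ_step_fields)
qed

lemma gval_succ_step_le: "y \<in> known C \<Longrightarrow> gval (succ_step c upd h (a, l, b) C) y \<le> gval C y"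
  by (cases "y = b") (simp_all add: succ_step_target(3) gval_succ_step_other)

lemma succ_step_improves: "improves C (succ_step c upd h (a, l, b) C)"
  using gval_succ_step_le by (auto simp: improves_def succ_step_fields)

lemma succ_step_cfg_wf: "cfg_wf (succ_step c upd h (a, l, b) C)"
proof -
  define C' where "C' = succ_step c upd h (a, l, b) C"
  have known': "known C' = insert b (known C)"
    by (simp add: C'_def succ_step_fields)
  have "dom (pinf C') = insert b (dom (pinf C))"
  proof (rule set_eqI)
    fix y
    show "y \<in> dom (pinf C') \<longleftrightarrow> y \<in> insert b (dom (pinf C))"
      using succ_step_target(1) by (cases "y = b") (auto simp: C'_def succ_step_fields upd_p_other)
  qed
  then have dom': "dom (pinf C') = known C'"
    using wf known' by (simp add: cfg_wf_def)
  have closed': "closed C' \<subseteq> closed C"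
    unfolding C'_def by (rule succ_step_opn_closed(3))
  have opn': "\<forall>e\<in>#opn C'. e \<in># opn C \<or> fst e = b"
    unfolding C'_def by (blast dest: succ_step_opn_closed(2))
  have reach': "reach_info T sI iota0 upd refine (hinf C') (known C')"
    using wf edge source_known unfolding cfg_wf_def
    by (simp add: C'_def succ_step_fields reach_info.update)
  have paths': "\<exists>p. is_path T sI p y \<and> path_cost c p = gval C' y" if y: "y \<in> known C'" for y
  proof (cases "y = b \<and> pinf C' b \<noteq> pinf C b")
    case True
    obtain p where "is_path T sI p a" "path_cost c p = gval C a"
      using wf source_known unfolding cfg_wf_def by blast
    moreover have "gval C' b = gval C a + c l"
      using True succ_step_target(4)[folded C'_def] by blast
    ultimately show ?thesis
      using True edge by (intro exI[of _ "p @ [(a, l, b)]"]) auto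
  next
    case False
    then have same: "pinf C' y = pinf C y"
      by (cases "y = b") (auto simp: C'_def succ_step_fields upd_p_other)
    then have "y \<in> dom (pinf C)"
      using dom' y by (metis domIff)
    then have "y \<in> known C"
      using wf by (simp add: cfg_wf_def)
    then show ?thesis
      using same wf unfolding cfg_wf_def gval_def by auto
  qed
  have "known C' \<subseteq> S" "closed C' \<subseteq> known C'" "\<forall>e\<in>#opn C'. fst e \<in> known C'"
    using wf targets_in_S[OF edge] known' closed' opn' unfolding cfg_wf_def by auto
  with dom' reach' paths' show ?thesis
    unfolding C'_def[symmetric] cfg_wf_def by blast
qed

lemma h_succ_step_target_finite:
  "hstar T c SG b < \<infinity> \<Longrightarrow> h b (hinf (succ_step c upd h (a, l, b) C)) < \<infinity>"
  using succ_step_cfg_wf targets_in_S[OF edge] h_finite_if_solvable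
  unfolding cfg_wf_def by blast

lemma gval_succ_step_unchanged:
  "b \<in> known C \<Longrightarrow> gval C b \<le> gval (succ_step c upd h (a, l, b) C) b
   \<Longrightarrow> gval (succ_step c upd h (a, l, b) C) b = gval C b"
  using succ_step_target(3) by (rule antisym)

lemma succ_step_open_complete:
  assumes "open_complete C"
  shows "open_complete (succ_step c upd h (a, l, b) C)"
  unfolding open_complete_def
proof (intro ballI impI)
  define C' where "C' = succ_step c upd h (a, l, b) C"
  fix x assume x: "x \<in> known C' - closed C'" and solvable: "hstar T c SG x < \<infinity>"
  show "\<exists>hh. (x, gval C' x, hh) \<in># opn C'"
  proof (cases "x = b")
    case False
    then have "x \<in> known C - closed C"
      using x succ_step_opn_closed(4) by (fastforce simp: C'_def succ_step_fields)
    then obtain hh where "(x, gval C x, hh) \<in># opn C"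
      using assms solvable unfolding open_complete_def by blast
    then show ?thesis
      using False by (metis C'_def gval_succ_step_other succ_step_opn_closed(1))
  next
    case True
    show ?thesis
      using C'_def
    proof (cases rule: succ_step_cases)
      case infinite
      then show ?thesis
        using h_succ_step_target_finite solvable True by (simp add: C'_def)
    next
      case unchanged
      then have "b \<in> known C - closed C" "gval C' b = gval C b"
        using x True gval_succ_step_unchanged by (auto simp: C'_def)
      then show ?thesis
        using assms solvable True unchanged unfolding open_complete_def by auto
    qed (use True in auto)
  qed
qed

lemma succ_step_closed_recorded:
  assumes "closed_recorded C"
  shows "closed_recorded (succ_step c upd h (a, l, b) C)"
  unfolding closed_recorded_def
proof (intro ballI impI)
  define C' where "C' = succ_step c upd h (a, l, b) C"
  fix x assume x: "x \<in> closed C'" and solvable: "hstar T c SG x < \<infinity>"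
  then have "x \<in> closed C"
    unfolding C'_def by (blast dest: subsetD[OF succ_step_opn_closed(3)])
  then have recorded: "(x, gval C x) \<in> set (hist C')"
    using assms solvable unfolding closed_recorded_def by (simp add: C'_def succ_step_fields)
  show "(x, gval C' x) \<in> set (hist C')"
  proof (cases "x = b")
    case True
    show ?thesis
      using C'_def
    proof (cases rule: succ_step_cases)
      case infinite
      then show ?thesis
        using h_succ_step_target_finite solvable True by (simp add: C'_def)
    next
      case new
      then show ?thesis
        using \<open>x \<in> closed C\<close> True wf by (auto simp: cfg_wf_def)
    next
      case reopened
      then show ?thesis using x True by simp
    next
      case unchanged
      then show ?thesis
        using recorded True gval_succ_step_unchanged by (simp add: C'_def)
    qed
  qed (use recorded in \<open>simp add: C'_def gval_succ_step_other\<close>)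
qed

lemma succ_step_da_inv: "da_inv C \<Longrightarrow> da_inv (succ_step c upd h (a, l, b) C)"
  using succ_step_cfg_wf succ_step_open_complete succ_step_closed_recorded
  unfolding da_inv_def by blast

end

lemma fold_succ_step:
  assumes "da_inv C" "set ts \<subseteq> T" "\<forall>t\<in>set ts. fst t = a" "a \<in> known C"
  shows "da_inv (fold (succ_step c upd h) ts C) \<and> improves C (fold (succ_step c upd h) ts C)
    \<and> (\<forall>l b. (a, l, b) \<in> set ts \<longrightarrow> b \<in> known (fold (succ_step c upd h) ts C)
          \<and> gval (fold (succ_step c upd h) ts C) b \<le> gval C a + c l)"
  using assms
proof (induction ts arbitrary: C)
  case Nil
  then show ?case by (simp add: improves_refl)
next
  case (Cons t ts)
  obtain l b where t: "t = (a, l, b)"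
    using Cons.prems(3) by (cases t) auto
  have edge: "(a, l, b) \<in> T" and wf: "cfg_wf C"
    using Cons.prems(1,2) t by (auto simp: da_inv_def)
  define C1 where "C1 = succ_step c upd h (a, l, b) C"
  have inv1: "da_inv C1" and imp1: "improves C C1"
    using succ_step_da_inv[OF wf edge Cons.prems(4,1)] succ_step_improves[OF wf edge Cons.prems(4)]
    by (simp_all add: C1_def)
  have a1: "a \<in> known C1" and ga1: "gval C1 a \<le> gval C a"
    using imp1 Cons.prems(4) unfolding improves_def by auto
  have b1: "b \<in> known C1" "gval C1 b \<le> gval C a + c l"
    using succ_step_target(2)[OF wf edge Cons.prems(4)] by (simp_all add: C1_def succ_step_fields)
  define F where "F = fold (succ_step c upd h) ts C1"
  have IH: "da_inv F" "improves C1 F"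
    "\<forall>l b. (a, l, b) \<in> set ts \<longrightarrow> b \<in> known F \<and> gval F b \<le> gval C1 a + c l"
    using Cons.IH[OF inv1 _ _ a1] Cons.prems(2,3) unfolding F_def by auto
  have "b \<in> known F" "gval F b \<le> gval C a + c l"
    using IH(2) b1 unfolding improves_def by force+
  then have "\<forall>l' b'. (a, l', b') \<in> set (t # ts) \<longrightarrow> b' \<in> known F \<and> gval F b' \<le> gval C a + c l'"
    using IH(3) ga1 t by fastforce
  moreover have "fold (succ_step c upd h) (t # ts) C = F"
    by (simp add: F_def C1_def t)
  ultimately show ?case
    using IH(1) improves_trans[OF imp1 IH(2)] by simp
qed

lemma expansions_relaxed_cong:
  "expansions_relaxed C \<Longrightarrow> hist C' = hist C \<Longrightarrow> known C' = known C \<Longrightarrow> pinf C' = pinf C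
   \<Longrightarrow> expansions_relaxed C'"
  by (simp add: expansions_relaxed_def gval_def)

lemma skip_da_inv:
  assumes inv: "da_inv C" and "s \<in> closed C"
  shows "da_inv (C\<lparr>opn := opn C - {#(s, gh, hh)#}\<rparr>)"
proof -
  have "open_complete (C\<lparr>opn := opn C - {#(s, gh, hh)#}\<rparr>)"
    using inv assms(2) unfolding da_inv_def open_complete_def
    by (auto simp: gval_def in_diff_count)
  moreover have "cfg_wf (C\<lparr>opn := opn C - {#(s, gh, hh)#}\<rparr>)"
    using inv unfolding da_inv_def cfg_wf_def by (auto simp: gval_def dest: in_diffD)
  ultimately show ?thesis
    using inv unfolding da_inv_def closed_recorded_def by (simp add: gval_def)
qed

lemma reeval_da_inv:
  assumes inv: "da_inv C" and popped: "(s, gh, hh) \<in># opn C" "s \<notin> closed C"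
  defines "\<iota>1 \<equiv> refine (hinf C) s"
  shows "da_inv (C\<lparr>hinf := \<iota>1, opn := opn C - {#(s, gh, hh)#} +
            (if h s \<iota>1 < \<infinity> then {#(s, gval C s, h s \<iota>1)#} else {#})\<rparr>)"
    (is "da_inv ?C'")
proof -
  have wf: "cfg_wf C" using inv by (simp add: da_inv_def)
  then have s: "s \<in> known C" "s \<in> S"
    using popped(1) unfolding cfg_wf_def by force+
  have reach: "reach_info T sI iota0 upd refine \<iota>1 (known C)"
    unfolding \<iota>1_def using wf s(1) by (simp add: cfg_wf_def reach_info.refine)
  have gval': "gval ?C' = gval C"
    by (simp add: gval_def fun_eq_iff)
  have "cfg_wf ?C'"
    using wf s(1) reach unfolding cfg_wf_def gval' by (auto dest: in_diffD)
  moreover have "open_complete ?C'"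
    unfolding open_complete_def gval'
  proof (intro ballI impI)
    fix x assume x: "x \<in> known ?C' - closed ?C'" and solvable: "hstar T c SG x < \<infinity>"
    show "\<exists>hh'. (x, gval C x, hh') \<in># opn ?C'"
    proof (cases "x = s")
      case True
      then show ?thesis
        using h_finite_if_solvable[OF reach s(2)] solvable by auto
    next
      case False
      then show ?thesis
        using inv x solvable unfolding da_inv_def open_complete_def by (auto simp: in_diff_count)
    qed
  qed
  ultimately show ?thesis
    using inv unfolding da_inv_def closed_recorded_def gval' by simp
qed

lemma expand_start_da_inv:
  assumes inv: "da_inv C" and popped: "(s, gh, hh) \<in># opn C" "s \<notin> closed C"
  shows "da_inv (C\<lparr>hinf := refine (hinf C) s, opn := opn C - {#(s, gh, hh)#},
                  closed := insert s (closed C), hist := hist C @ [(s, gval C s)]\<rparr>)"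
    (is "da_inv ?C0")
proof -
  have wf: "cfg_wf C" using inv by (simp add: da_inv_def)
  then have s: "s \<in> known C"
    using popped(1) unfolding cfg_wf_def by force
  have gval0: "gval ?C0 = gval C"
    by (simp add: gval_def fun_eq_iff)
  have "cfg_wf ?C0"
    using wf s unfolding cfg_wf_def gval0 by (auto dest: in_diffD intro: reach_info.refine)
  moreover have "open_complete ?C0"
    using inv unfolding da_inv_def open_complete_def gval0 by (auto simp: in_diff_count)
  moreover have "closed_recorded ?C0"
    using inv unfolding da_inv_def closed_recorded_def gval0 by auto
  ultimately show ?thesis
    by (simp add: da_inv_def)
qed

lemma expand_da_inv:
  assumes inv: "da_inv C" and relaxed: "expansions_relaxed C"
    and popped: "(s, gh, hh) \<in># opn C" "s \<notin> closed C"
    and succs: "set ts = {t \<in> T. fst t = s}"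
  defines "C0 \<equiv> C\<lparr>hinf := refine (hinf C) s, opn := opn C - {#(s, gh, hh)#},
                  closed := insert s (closed C), hist := hist C @ [(s, gval C s)]\<rparr>"
  shows "da_inv (fold (succ_step c upd h) ts C0) \<and> expansions_relaxed (fold (succ_step c upd h) ts C0)"
proof -
  define F where "F = fold (succ_step c upd h) ts C0"
  have s: "s \<in> known C0"
    using inv popped(1) unfolding C0_def da_inv_def cfg_wf_def by force
  have fold: "da_inv F" "improves C0 F"
    "\<forall>l y. (s, l, y) \<in> set ts \<longrightarrow> y \<in> known F \<and> gval F y \<le> gval C0 s + c l"
    using fold_succ_step[OF expand_start_da_inv[OF inv popped] _ _ s[unfolded C0_def]] succs
    unfolding F_def C0_def by auto
  have gval0: "gval C0 = gval C"
    by (simp add: C0_def gval_def fun_eq_iff)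
  have "y \<in> known F \<and> gval F y \<le> g + c l" if xg: "(x, g) \<in> set (hist F)" and edge: "(x, l, y) \<in> T"
    for x g l y
  proof -
    have "(x, g) \<in> set (hist C) \<or> (x, g) = (s, gval C s)"
      using xg fold(2) by (auto simp: improves_def C0_def)
    then show ?thesis
    proof
      assume "(x, g) \<in> set (hist C)"
      then have "y \<in> known C0" "gval C0 y \<le> g + c l"
        using relaxed edge gval0 unfolding expansions_relaxed_def by (auto simp: C0_def)
      then show ?thesis
        using fold(2) unfolding improves_def by force
    next
      assume "(x, g) = (s, gval C s)"
      then show ?thesis
        using fold(3) edge succs gval0 by auto
    qed
  qed
  then show ?thesis
    using fold(1) unfolding F_def[symmetric] expansions_relaxed_def by blast
qed

lemma init_da_inv: "da_inv (da_init sI iota0 h) \<and> expansions_relaxed (da_init sI iota0 h)"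
proof -
  have "\<exists>p. is_path T sI p sI \<and> path_cost c p = 0"
    by (rule exI[of _ "[]"]) simp
  then have "cfg_wf (da_init sI iota0 h)"
    using initial_in_S by (simp add: cfg_wf_def da_init_def gval_def reach_info.init)
  moreover have "open_complete (da_init sI iota0 h)"
    using h_finite_if_solvable[OF reach_info.init initial_in_S]
    by (simp add: open_complete_def da_init_def gval_def)
  ultimately show ?thesis
    by (simp add: da_inv_def closed_recorded_def expansions_relaxed_def da_init_def)
qed

lemma da_step_da_inv:
  assumes "da_step c T SG upd refine h reeval C C'" and "da_inv C" and "expansions_relaxed C"
  shows "da_inv C' \<and> expansions_relaxed C'"
  using assms(1)
proof cases
  case (skip e s gh hh)
  then show ?thesis
    using skip_da_inv assms(2,3) expansions_relaxed_cong by simp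
next
  case (reeval e s gh hh \<iota>1)
  then have "da_inv C'"
    using reeval_da_inv[OF assms(2), of s gh hh] by (simp only:) blast
  then show ?thesis
    using reeval assms(3) expansions_relaxed_cong by simp
next
  case (expand e s gh hh \<iota>1 ts)
  then show ?thesis
    using expand_da_inv assms(2,3) by simp
qed

lemma reachable_da_inv:
  "(da_step c T SG upd refine h reeval)\<^sup>*\<^sup>* (da_init sI iota0 h) C \<Longrightarrow> da_inv C \<and> expansions_relaxed C"
  by (induction rule: rtranclp_induct) (auto simp: init_da_inv dest: da_step_da_inv)

theorem settled_successor_open_or_settled:
  assumes reachable: "(da_step c T SG upd refine h reeval)\<^sup>*\<^sup>* (da_init sI iota0 h) C"
    and settled: "settled T c sI C s" and solvable: "hstar T c SG s' < \<infinity>"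
    and path: "is_path T sI ts s'" and optimal: "ereal (path_cost c ts) = gstar T c sI s'"
    and last: "ts \<noteq> []" "last ts = (s, l, s')"
  shows "(\<exists>g hh. (s', g, hh) \<in># opn C \<and> ereal g = gstar T c sI s') \<or> settled T c sI C s'"
proof -
  have inv: "cfg_wf C" "open_complete C" "closed_recorded C" "expansions_relaxed C"
    using reachable_da_inv[OF reachable] by (simp_all add: da_inv_def)
  obtain g where expanded: "(s, g) \<in> set (hist C)" and g: "ereal g = gstar T c sI s"
    using settled unfolding settled_def by blast
  have edge: "(s, l, s') \<in> T" and prefix: "gstar T c sI s + ereal (c l) \<le> ereal (path_cost c ts)"
    using gstar_last_step_le[OF path last] by auto
  have known: "s' \<in> known C" and relaxed: "gval C s' \<le> g + c l"
    using inv(4) expanded edge unfolding expansions_relaxed_def by blast+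
  have "ereal (gval C s') \<le> ereal g + ereal (c l)"
    using relaxed by simp
  also have "\<dots> \<le> ereal (path_cost c ts)"
    using prefix g by simp
  finally have "ereal (gval C s') \<le> gstar T c sI s'"
    using optimal by simp
  moreover obtain p where "is_path T sI p s'" "path_cost c p = gval C s'"
    using inv(1) known unfolding cfg_wf_def by blast
  then have "gstar T c sI s' \<le> ereal (gval C s')"
    using gstar_le_path_cost by metis
  ultimately have exact: "ereal (gval C s') = gstar T c sI s'"
    by (rule antisym)
  show ?thesis
  proof (cases "s' \<in> closed C")
    case True
    then show ?thesis
      using inv(3) solvable exact unfolding closed_recorded_def settled_def by blast
  next
    case False
    then show ?thesis
      using inv(2) known solvable exact unfolding open_complete_def by blast
  qed
qed

end

theorem lemma2:
  fixes S :: "'s set" and L :: "'l set" and c :: "'l \<Rightarrow> real"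
    and T :: "('s,'l) trans set" and sI :: 's and SG :: "'s set"
    and iota0 :: 'i and upd :: "'i \<Rightarrow> ('s,'l) trans \<Rightarrow> 'i" and refine :: "'i \<Rightarrow> 's \<Rightarrow> 'i"
    and h :: "'s \<Rightarrow> 'i \<Rightarrow> ereal" and reeval :: bool
    and C :: "('s,'l,'i) cfg" and s s' :: 's and l :: 'l and ts :: "('s,'l) trans list"
  assumes "trans_sys S L c T sI SG"
    and "dyn_heuristic h"
    and "dyn_safe S T c sI SG iota0 upd refine h"
    and "(da_step c T SG upd refine h reeval)\<^sup>*\<^sup>* (da_init sI iota0 h) C"
    and "opn C \<noteq> {#}"
    and "settled T c sI C s"
    and "hstar T c SG s' < \<infinity>"
    and "is_path T sI ts s'" and "ereal (path_cost c ts) = gstar T c sI s'"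
    and "ts \<noteq> []" and "last ts = (s, l, s')"
  shows "(\<exists>g hh. (s', g, hh) \<in># opn C \<and> ereal g = gstar T c sI s') \<or> settled T c sI C s'"
proof -
  interpret dyn_astar S c T sI SG iota0 upd refine h
    using assms(1,3) by unfold_locales (auto simp: trans_sys_def)
  show ?thesis
    using settled_successor_open_or_settled[OF assms(4,6-11)] .
qed

end
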